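(* Fix a cell with no source term ($S=0$) and total energy $E=1$, and a positive integer $N_{obj}$. Start from a finite population of $N^0\ge1$ particles with positive weights summing to $1$, and apply repeatedly (with fresh independent uniform random variables at each iteration) the cell-based population control step with non-conservative splitting described in the context, each time to the population produced by the previous iteration. Let $N^l$ be the number of particles in the cell after the $l$-th iteration. Then $\lim_{l\to\infty}\mathbb{P}(N^l=N_{obj})=1$; more precisely, there exists $\lambda>0$ such that $\mathbb{P}(N^l\neq N_{obj})\le e^{-l\lambda}$ for all $l$.
   Context: Cell-based population control step for a single cell. Input: a finite collection of existing particles with positive weights $w_1,\dots,w_N$, their total energy $E=\sum_p w_p$, a source energy $S\ge0$, and a positive integer $N_{obj}$, with $E+S>0$. (1) Set $w_{obj}=(E+S)/N_{obj}$. (2) If $S>0$, emit $N^{vol}=\max(1,\lfloor S/w_{obj}\rfloor)$ particles of weight $S/N^{vol}$; otherwise none. (3) If $E>0$, for each existing particle $p$ draw independently $u_p\sim\mathcal U(0,1)$, set $I_p=\lfloor w_p/w_{obj}\rfloor$, $R_p=w_p/w_{obj}-I_p$. If $I_p=0$ (Russian Roulette): the particle is killed if $R_p<u_p$, otherwise its weight becomes $w_{obj}$. If $I_p\ge1$ (Splitting): with $N^{split}_p=I_p+\mathbf 1_{\{u_p<R_p\}}$, the particle is replaced by $N^{split}_p$ copies each of weight $w_{obj}$ (non-conservative splitting). (4) Renormalization: multiply all particle weights by $c=(E+S)/(\text{total weight after (2)-(3)})$. (5) Non-void correction: if $S=0$ and no particle remains after (3), the population becomes a single particle of weight $E$. 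*)

theory Defs
  imports "HOL-Probability.Probability"
begin

text \<open>The per-particle uniform random numbers of one step are given as a
  function u :: nat => real, u p being the number attached to the p-th particle
  (list position) of the existing population.\<close>

definition pc_particle :: "real \<Rightarrow> real \<Rightarrow> real \<Rightarrow> real list" where
  "pc_particle wobj w up =
     (let I = nat \<lfloor>w / wobj\<rfloor>; R = w / wobj - real I in
      if I = 0 then (if R < up then [] else [wobj])
      else replicate (I + (if up < R then 1 else 0)) wobj)"

definition pc_step :: "nat \<Rightarrow> real \<Rightarrow> real list \<Rightarrow> (nat \<Rightarrow> real) \<Rightarrow> real list" where
  "pc_step Nobj S ws u =
     (let E = sum_list ws;
          wobj = (E + S) / real Nobj;
          nvol = max 1 (nat \<lfloor>S / wobj\<rfloor>);
          vol = (if S > 0 then replicate nvol (S / real nvol) else []);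
          ex = (if E > 0 then concat (map (\<lambda>p. pc_particle wobj (ws ! p) (u p)) [0..<length ws])
                else ws);
          pop = vol @ ex;
          c = (E + S) / sum_list pop
      in if S = 0 \<and> ex = [] then [E] else map (\<lambda>w. c * w) pop)"

text \<open>Iterating the step with S = 0; omega (l, p) is the uniform number used for
  particle p at iteration l+1.\<close>
fun pc_iter :: "nat \<Rightarrow> real list \<Rightarrow> (nat \<times> nat \<Rightarrow> real) \<Rightarrow> nat \<Rightarrow> real list" where
  "pc_iter Nobj ws0 \<omega> 0 = ws0"
| "pc_iter Nobj ws0 \<omega> (Suc l) = pc_step Nobj 0 (pc_iter Nobj ws0 \<omega> l) (\<lambda>p. \<omega> (l, p))"

definition unif_space :: "(nat \<times> nat \<Rightarrow> real) measure" where
  "unif_space = PiM UNIV (\<lambda>_. uniform_measure lborel {0<..<1})"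

end

theory Submission
  imports Defs
begin

(*
  With S = 0 and E = 1 every step returns a uniform population: its size is the number n of
  copies drawn, and renormalisation gives each copy weight 1/n.  Writing x_p = w_p N, particle
  p yields floor x_p copies plus one more with probability frac x_p, and the fractional parts
  add up to the integer N - sum_p floor x_p.  Hence on some box of positive volume in the
  uniform variables of the particles exactly N copies are made.  After the first step only the finitely
  many uniform populations of size at most 2 N + N^0 occur, and the target (N copies of
  weight 1/N) is kept with probability one.  Since each step uses fresh variables, independent
  of the past, the probability of not being at the target contracts by a fixed factor 1 - q
  per step, giving the bound (1 - q)^l <= exp (- l q).
*)

definition uniform_population :: "nat \<Rightarrow> real list" where
  "uniform_population n = replicate n (1 / real n)"

text \<open>For total energy 1 and no source the target weight is \<open>1 / N\<close>.\<close>

definition n_copies :: "nat \<Rightarrow> real \<Rightarrow> real \<Rightarrow> nat" where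
  "n_copies N w u = length (pc_particle (1 / real N) w u)"

definition n_offspring :: "nat \<Rightarrow> real list \<Rightarrow> (nat \<Rightarrow> real) \<Rightarrow> nat" where
  "n_offspring N ws u = (\<Sum>p<length ws. n_copies N (ws ! p) (u p))"

lemma length_uniform_population [simp]: "length (uniform_population n) = n"
  by (simp add: uniform_population_def)

lemma sum_list_uniform_population [simp]: "0 < n \<Longrightarrow> sum_list (uniform_population n) = 1"
  by (simp add: uniform_population_def sum_list_replicate)

lemma n_copies_eq:
  "n_copies N w u =
     (let I = nat \<lfloor>w * N\<rfloor>; R = w * N - real I in
      if I = 0 then (if R < u then 0 else 1) else I + (if u < R then 1 else 0))"
  by (simp add: n_copies_def pc_particle_def Let_def)

lemma n_copies_le: "n_copies N w u \<le> nat \<lfloor>w * N\<rfloor> + 1"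
  by (simp add: n_copies_eq Let_def)

text \<open>Roulette and splitting are one rule: \<open>\<lfloor>w N\<rfloor>\<close> copies, plus one more when \<open>u\<close> falls
  below the fractional part of \<open>w N\<close>.\<close>

lemma n_copies_eq_floor:
  assumes "0 \<le> w" and "u \<noteq> frac (w * N)"
  shows "n_copies N w u = nat \<lfloor>w * N\<rfloor> + (if u < frac (w * N) then 1 else 0)"
proof -
  have "\<lfloor>w * N\<rfloor> = 0" if "w * N < 1"
    using assms(1) that by (simp add: floor_eq_iff)
  then show ?thesis
    using assms by (auto simp: n_copies_eq Let_def frac_def)
qed

lemma sum_floor_add_sum_frac:
  fixes ws :: "real list" and N :: nat
  assumes "\<forall>w\<in>set ws. 0 \<le> w" and "sum_list ws = 1"
  shows "real (\<Sum>p<length ws. nat \<lfloor>ws ! p * N\<rfloor>) + (\<Sum>p<length ws. frac (ws ! p * N)) = N"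
proof -
  have "real (nat \<lfloor>ws ! p * N\<rfloor>) + frac (ws ! p * N) = ws ! p * N" if "p < length ws" for p
    using assms(1) that by (simp add: frac_def)
  then have "real (\<Sum>p<length ws. nat \<lfloor>ws ! p * N\<rfloor>) + (\<Sum>p<length ws. frac (ws ! p * N))
      = (\<Sum>p<length ws. ws ! p * N)"
    by (simp add: sum.distrib[symmetric])
  also have "\<dots> = N"
    using assms(2) by (simp add: sum_list_sum_nth atLeast0LessThan sum_distrib_right[symmetric])
  finally show ?thesis .
qed

lemma sum_floor_le:
  fixes ws :: "real list" and N :: nat
  assumes "\<forall>w\<in>set ws. 0 \<le> w" and "sum_list ws = 1"
  shows "(\<Sum>p<length ws. nat \<lfloor>ws ! p * N\<rfloor>) \<le> N"
proof -
  have "0 \<le> (\<Sum>p<length ws. frac (ws ! p * N))"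
    by (simp add: sum_nonneg)
  then show ?thesis
    using sum_floor_add_sum_frac[OF assms, of N] by linarith
qed

lemma n_offspring_le:
  assumes "\<forall>w\<in>set ws. 0 \<le> w" and "sum_list ws = 1"
  shows "n_offspring N ws u \<le> N + length ws"
proof -
  have "n_offspring N ws u \<le> (\<Sum>p<length ws. nat \<lfloor>ws ! p * N\<rfloor> + 1)"
    unfolding n_offspring_def by (intro sum_mono n_copies_le)
  also have "\<dots> = (\<Sum>p<length ws. nat \<lfloor>ws ! p * N\<rfloor>) + length ws"
    by (simp only: sum.distrib) simp
  finally show ?thesis
    using sum_floor_le[OF assms, of N] by simp
qed

lemma n_offspring_uniform_le:
  assumes "0 < n"
  shows "n_offspring N (uniform_population n) u \<le> max n (2 * N)"
proof (cases "N < n")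
  case True
  have "n_copies N (1 / n) (u p) \<le> 1" for p
    using n_copies_le[of N "1 / n" "u p"] True by (simp add: floor_less_iff)
  then have "(\<Sum>p<n. n_copies N (1 / n) (u p)) \<le> (\<Sum>p<n. 1)"
    by (intro sum_mono)
  then show ?thesis
    by (simp add: n_offspring_def uniform_population_def)
next
  case False
  moreover have "\<forall>w\<in>set (uniform_population n). 0 \<le> w"
    by (simp add: uniform_population_def)
  ultimately show ?thesis
    using n_offspring_le[of "uniform_population n" N u] assms by simp
qed

lemma n_offspring_eq_floor_add_card:
  assumes "\<forall>w\<in>set ws. 0 \<le> w" and "C \<subseteq> {..<length ws}"
    and "\<forall>p\<in>C. u p < frac (ws ! p * N)" and "\<forall>p\<in>{..<length ws} - C. frac (ws ! p * N) < u p"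
  shows "n_offspring N ws u = (\<Sum>p<length ws. nat \<lfloor>ws ! p * N\<rfloor>) + card C"
proof -
  have "n_copies N (ws ! p) (u p) = nat \<lfloor>ws ! p * N\<rfloor> + (if p \<in> C then 1 else 0)"
    if "p < length ws" for p
  proof -
    have w: "0 \<le> ws ! p"
      using assms(1) that by simp
    show ?thesis
    proof (cases "p \<in> C")
      case True
      with assms(3) have "u p < frac (ws ! p * N)"
        by blast
      with True show ?thesis
        using n_copies_eq_floor[OF w less_imp_neq] by simp
    next
      case False
      with assms(4) that have "frac (ws ! p * N) < u p"
        by blast
      with False show ?thesis
        using n_copies_eq_floor[OF w not_sym[OF less_imp_neq]] by simp
    qed
  qed
  then have "n_offspring N ws u = (\<Sum>p<length ws. nat \<lfloor>ws ! p * N\<rfloor> + (if p \<in> C then 1 else 0))"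
    unfolding n_offspring_def by (intro sum.cong) auto
  also have "\<dots> = (\<Sum>p<length ws. nat \<lfloor>ws ! p * N\<rfloor>) + card C"
    using assms(2) by (simp add: sum.distrib sum.If_cases Int_absorb1)
  finally show ?thesis .
qed

lemma n_offspring_uniform_target:
  assumes "\<forall>p<N. 0 < u p"
  shows "n_offspring N (uniform_population N) u = N"
proof -
  have "n_copies N (1 / N) (u p) = 1" if "p < N" for p
    using n_copies_eq_floor[of "1 / N" "u p" N] assms[rule_format, OF that] that by (simp add: frac_def)
  then show ?thesis
    by (simp add: n_offspring_def uniform_population_def)
qed

lemma sum_le_card_pos:
  fixes f :: "'a \<Rightarrow> real"
  assumes "finite A" and "\<forall>i\<in>A. 0 \<le> f i \<and> f i \<le> 1"
  shows "sum f A \<le> card {i\<in>A. 0 < f i}"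
proof -
  have "sum f A = sum f {i\<in>A. 0 < f i}"
    using assms by (intro sum.mono_neutral_right) force+
  also have "\<dots> \<le> card {i\<in>A. 0 < f i}"
    using assms by (intro sum_bounded_above[where K = 1, simplified]) auto
  finally show ?thesis .
qed

lemma exists_box_n_offspring_eq:
  fixes ws :: "real list" and N :: nat
  assumes nonneg: "\<forall>w\<in>set ws. 0 \<le> w" and sum: "sum_list ws = 1"
  shows "\<exists>a b. (\<forall>p<length ws. 0 \<le> a p \<and> a p < b p \<and> b p \<le> 1) \<and>
           (\<forall>u. (\<forall>p<length ws. a p < u p \<and> u p < b p) \<longrightarrow> n_offspring N ws u = N)"
proof -
  define R where "R p = frac (ws ! p * N)" for p
  define k where "k = N - (\<Sum>p<length ws. nat \<lfloor>ws ! p * N\<rfloor>)"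
  have R_01: "0 \<le> R p \<and> R p \<le> 1" for p
    using frac_lt_1[of "ws ! p * N"] by (simp add: R_def)
  have "real k = (\<Sum>p<length ws. R p)"
    using sum_floor_add_sum_frac[OF nonneg sum, of N] sum_floor_le[OF nonneg sum, of N]
    by (simp add: k_def R_def)
  also have "\<dots> \<le> card {p\<in>{..<length ws}. 0 < R p}"
    using R_01 by (intro sum_le_card_pos) auto
  finally obtain C where C: "C \<subseteq> {p\<in>{..<length ws}. 0 < R p}" and card_C: "card C = k"
    by (meson ex_card of_nat_le_iff)
  \<comment> \<open>the box forces one extra copy exactly for the particles in \<open>C\<close>\<close>
  define a where "a p = (if p \<in> C then 0 else R p)" for p
  define b where "b p = (if p \<in> C then R p else 1)" for p
  have "n_offspring N ws u = N" if u: "\<forall>p<length ws. a p < u p \<and> u p < b p" for u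
  proof -
    have "n_offspring N ws u = (\<Sum>p<length ws. nat \<lfloor>ws ! p * N\<rfloor>) + card C"
      using C u by (intro n_offspring_eq_floor_add_card[OF nonneg]) (auto simp: a_def b_def R_def)
    then show ?thesis
      using card_C sum_floor_le[OF nonneg sum, of N] by (simp add: k_def)
  qed
  moreover have "\<forall>p<length ws. 0 \<le> a p \<and> a p < b p \<and> b p \<le> 1"
    using C R_01 frac_lt_1 by (auto simp: a_def b_def R_def)
  ultimately show ?thesis
    by blast
qed

lemma pc_step_eq_uniform_population:
  assumes "0 < N" and "sum_list ws = 1"
  shows "pc_step N 0 ws u = uniform_population (max 1 (n_offspring N ws u))"
proof -
  define ex where "ex = concat (map (\<lambda>p. pc_particle (1 / real N) (ws ! p) (u p)) [0..<length ws])"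
  have "length ex = n_offspring N ws u"
    unfolding ex_def n_offspring_def n_copies_def length_concat map_map comp_def
    by (simp add: interv_sum_list_conv_sum_set_nat atLeast0LessThan)
  moreover have "\<forall>y\<in>set ex. y = 1 / real N"
    unfolding ex_def by (auto simp: pc_particle_def Let_def split: if_splits)
  ultimately have ex_eq: "ex = replicate (n_offspring N ws u) (1 / real N)"
    using replicate_length_same by metis
  have "pc_step N 0 ws u = (if ex = [] then [1] else map (\<lambda>w. (1 / sum_list ex) * w) ex)"
    unfolding pc_step_def Let_def ex_def using assms(2) by simp
  then show ?thesis
    using assms(1)
    by (cases "n_offspring N ws u = 0")
       (simp_all add: ex_eq uniform_population_def sum_list_replicate max_def)
qed

lemma pc_iter_cong:
  assumes "\<And>k p. k < l \<Longrightarrow> \<omega> (k, p) = \<omega>' (k, p)"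
  shows "pc_iter N ws0 \<omega> l = pc_iter N ws0 \<omega>' l"
  using assms by (induction l) auto

lemma measurable_n_copies [measurable]: "n_copies N w \<in> borel \<rightarrow>\<^sub>M count_space UNIV"
  unfolding n_copies_eq Let_def by measurable

abbreviation unif01 :: "real measure" where
  "unif01 \<equiv> uniform_measure lborel {0<..<1}"

lemma prob_space_unif01: "prob_space unif01"
  by (rule prob_space_uniform_measure) auto

lemma product_prob_space_unif01: "product_prob_space (\<lambda>_. unif01)"
  by (simp add: product_prob_space_def product_sigma_finite_def product_prob_space_axioms_def
      prob_space_unif01 prob_space_imp_sigma_finite)

lemma prob_space_unif_space: "prob_space unif_space"
  unfolding unif_space_def by (rule prob_space_PiM) (rule prob_space_unif01)

lemma indep_var_restrict_components:
  fixes M :: "'i \<Rightarrow> 'a measure"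
  assumes "product_prob_space M" and "KA \<inter> KB = {}"
  shows "prob_space.indep_var (PiM UNIV M)
           (PiM KA M) (\<lambda>x. restrict x KA) (PiM KB M) (\<lambda>x. restrict x KB)"
proof -
  interpret product_prob_space M UNIV
    by (rule assms(1))
  have "P.indep_vars M (\<lambda>i x. x i) UNIV"
    by (subst P.indep_vars_iff_distr_eq_PiM)
       (simp_all add: PiM_component restrict_UNIV measurable_component_singleton)
  from P.indep_var_restrict[OF this assms(2)] show ?thesis
    by simp
qed

definition row_box ::
    "nat \<Rightarrow> (nat \<Rightarrow> real) \<Rightarrow> (nat \<Rightarrow> real) \<Rightarrow> nat \<Rightarrow> (nat \<times> nat \<Rightarrow> real) set" where
  "row_box l a b n = {\<omega> \<in> space unif_space. \<forall>p<n. a p < \<omega> (l, p) \<and> \<omega> (l, p) < b p}"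

lemma sets_row_box_PiM:
  fixes K :: "(nat \<times> nat) set"
  assumes "\<And>p. (l, p) \<in> K"
  shows "{\<omega> \<in> space (PiM K (\<lambda>_. unif01)). \<forall>p<n. a p < \<omega> (l, p) \<and> \<omega> (l, p) < b p}
           \<in> sets (PiM K (\<lambda>_. unif01))"
  using assms by measurable

lemma sets_row_box: "row_box l a b n \<in> sets unif_space"
  unfolding row_box_def unif_space_def by (rule sets_row_box_PiM) simp

lemma measure_row_box:
  assumes "\<forall>p<n. 0 \<le> a p \<and> a p < b p \<and> b p \<le> 1"
  shows "measure unif_space (row_box l a b n) = (\<Prod>p<n. b p - a p)"
proof -
  interpret product_prob_space "\<lambda>_. unif01" UNIV
    by (rule product_prob_space_unif01)
  let ?J = "(\<lambda>p. (l, p)) ` {..<n}" and ?X = "\<lambda>i. {a (snd i)<..<b (snd i)}"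
  have "row_box l a b n = {\<omega> \<in> space unif_space. \<forall>i\<in>?J. \<omega> i \<in> ?X i}"
    by (auto simp: row_box_def)
  also have "emeasure unif_space \<dots> = (\<Prod>i\<in>?J. emeasure unif01 (?X i))"
    unfolding unif_space_def by (rule emeasure_PiM_Collect) auto
  also have "\<dots> = (\<Prod>p<n. ennreal (b p - a p))"
    using assms
    by (subst prod.reindex) (auto simp: inj_on_def less_imp_le divide_ennreal_def intro!: prod.cong)
  also have "\<dots> = ennreal (\<Prod>p<n. b p - a p)"
    by (rule prod_ennreal) (use assms in \<open>auto simp: less_imp_le\<close>)
  finally have "emeasure unif_space (row_box l a b n) = ennreal (\<Prod>p<n. b p - a p)" .
  moreover have "0 \<le> (\<Prod>p<n. b p - a p)"
    by (rule prod_nonneg) (use assms in \<open>auto simp: less_imp_le\<close>)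
  ultimately show ?thesis
    by (simp add: measure_def)
qed

interpretation unif: prob_space unif_space
  by (rule prob_space_unif_space)

locale population_control =
  fixes N :: nat and ws0 :: "real list"
  assumes N_pos: "0 < N"
    and ws0_nonneg: "\<forall>w\<in>set ws0. 0 \<le> w"
    and ws0_sum: "sum_list ws0 = 1"
begin

abbreviation pop :: "(nat \<times> nat \<Rightarrow> real) \<Rightarrow> nat \<Rightarrow> real list" where
  "pop \<omega> l \<equiv> pc_iter N ws0 \<omega> l"

lemma sum_list_pop: "sum_list (pop \<omega> l) = 1"
  by (induction l) (simp_all add: ws0_sum N_pos pc_step_eq_uniform_population)

lemma pop_Suc:
  "pop \<omega> (Suc l) = uniform_population (max 1 (n_offspring N (pop \<omega> l) (\<lambda>p. \<omega> (l, p))))"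
  using N_pos sum_list_pop by (simp add: pc_step_eq_uniform_population)

declare pc_iter.simps(2) [simp del]

lemma pop_Suc_bounded: "\<exists>n\<in>{1..2 * N + length ws0}. pop \<omega> (Suc l) = uniform_population n"
proof (induction l)
  case 0
  have "n_offspring N ws0 (\<lambda>p. \<omega> (0, p)) \<le> N + length ws0"
    by (rule n_offspring_le[OF ws0_nonneg ws0_sum])
  then show ?case
    using N_pos unfolding pop_Suc
    by (intro bexI[of _ "max 1 (n_offspring N ws0 (\<lambda>p. \<omega> (0, p)))"]) auto
next
  case (Suc l)
  then obtain n where n: "n \<in> {1..2 * N + length ws0}" "pop \<omega> (Suc l) = uniform_population n"
    by blast
  let ?m = "n_offspring N (uniform_population n) (\<lambda>p. \<omega> (Suc l, p))"
  have "?m \<le> max n (2 * N)"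
    using n by (intro n_offspring_uniform_le) auto
  then show ?case
    using n unfolding pop_Suc[of \<omega> "Suc l"] by (intro bexI[of _ "max 1 ?m"]) auto
qed

definition reachable :: "real list set" where
  "reachable = insert ws0 (uniform_population ` {1..2 * N + length ws0})"

lemma finite_reachable: "finite reachable"
  by (simp add: reachable_def)

lemma pop_in_reachable: "pop \<omega> l \<in> reachable"
  using pop_Suc_bounded by (cases l) (auto simp: reachable_def)

lemma reachable_nonneg: "t \<in> reachable \<Longrightarrow> \<forall>w\<in>set t. 0 \<le> w"
  using ws0_nonneg by (auto simp: reachable_def uniform_population_def)

lemma sum_list_reachable: "t \<in> reachable \<Longrightarrow> sum_list t = 1"
  using ws0_sum by (auto simp: reachable_def)

lemma measurable_pop:
  fixes K :: "(nat \<times> nat) set"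
  assumes "\<And>k p. k < l \<Longrightarrow> (k, p) \<in> K"
  shows "(\<lambda>\<omega>. pop \<omega> l) \<in> PiM K (\<lambda>_. unif01) \<rightarrow>\<^sub>M count_space UNIV"
  using assms
proof (induction l)
  case (Suc l)
  have pop_l: "(\<lambda>\<omega>. pop \<omega> l) \<in> PiM K (\<lambda>_. unif01) \<rightarrow>\<^sub>M count_space reachable"
  proof (rule measurable_count_space_extend[OF subset_UNIV])
    show "(\<lambda>\<omega>. pop \<omega> l) \<in> space (PiM K (\<lambda>_. unif01)) \<rightarrow> reachable"
      using pop_in_reachable by blast
    show "(\<lambda>\<omega>. pop \<omega> l) \<in> PiM K (\<lambda>_. unif01) \<rightarrow>\<^sub>M count_space UNIV"
      using Suc by simp
  qed
  have "(l, p) \<in> K" for p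
    using Suc.prems by simp
  then have step: "(\<lambda>\<omega>. uniform_population (max 1 (n_offspring N t (\<lambda>p. \<omega> (l, p)))))
      \<in> PiM K (\<lambda>_. unif01) \<rightarrow>\<^sub>M count_space UNIV" for t
    unfolding n_offspring_def by measurable
  show ?case
    unfolding pop_Suc
    by (rule measurable_compose_countable'[OF step pop_l countable_finite[OF finite_reachable]])
qed simp

lemma sets_pop_PiM:
  fixes K :: "(nat \<times> nat) set"
  assumes "\<And>k p. k < l \<Longrightarrow> (k, p) \<in> K"
  shows "{\<omega> \<in> space (PiM K (\<lambda>_. unif01)). P (pop \<omega> l)} \<in> sets (PiM K (\<lambda>_. unif01))"
  using measurable_compose[OF measurable_pop[OF assms] measurable_count_space[where f = P]]
  by (simp add: pred_def)

lemma measurable_pop_unif_space [measurable]: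
  "(\<lambda>\<omega>. pop \<omega> l) \<in> unif_space \<rightarrow>\<^sub>M count_space UNIV"
  unfolding unif_space_def by (rule measurable_pop) simp

abbreviation target :: "real list" where
  "target \<equiv> uniform_population N"

abbreviation pop_eq :: "nat \<Rightarrow> real list \<Rightarrow> (nat \<times> nat \<Rightarrow> real) set" where
  "pop_eq l t \<equiv> {\<omega> \<in> space unif_space. pop \<omega> l = t}"

abbreviation escape :: "nat \<Rightarrow> real list \<Rightarrow> (nat \<times> nat \<Rightarrow> real) set" where
  "escape l t \<equiv> {\<omega> \<in> space unif_space. pop \<omega> l = t \<and> pop \<omega> (Suc l) \<noteq> target}"

lemma prob_pop_eq_inter_row_box:
  "unif.prob (pop_eq l t \<inter> row_box l a b n) = unif.prob (pop_eq l t) * unif.prob (row_box l a b n)"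
proof -
  define KA where "KA = {i :: nat \<times> nat. fst i < l}"
  define KB where "KB = {i :: nat \<times> nat. fst i = l}"
  define XA where "XA = {\<omega> \<in> space (PiM KA (\<lambda>_. unif01)). pop \<omega> l = t}"
  define XB where
    "XB = {\<omega> \<in> space (PiM KB (\<lambda>_. unif01)). \<forall>p<n. a p < \<omega> (l, p) \<and> \<omega> (l, p) < b p}"
  have XA: "XA \<in> sets (PiM KA (\<lambda>_. unif01))"
    unfolding XA_def by (rule sets_pop_PiM) (simp add: KA_def)
  have XB: "XB \<in> sets (PiM KB (\<lambda>_. unif01))"
    unfolding XB_def by (rule sets_row_box_PiM) (simp add: KB_def)
  have "unif.indep_var
      (PiM KA (\<lambda>_. unif01)) (\<lambda>\<omega>. restrict \<omega> KA) (PiM KB (\<lambda>_. unif01)) (\<lambda>\<omega>. restrict \<omega> KB)"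
    unfolding unif_space_def
    by (rule indep_var_restrict_components[OF product_prob_space_unif01]) (auto simp: KA_def KB_def)
  from unif.indep_varD[OF this XA XB]
  have indep: "unif.prob ((\<lambda>\<omega>. (restrict \<omega> KA, restrict \<omega> KB)) -` (XA \<times> XB) \<inter> space unif_space)
      = unif.prob ((\<lambda>\<omega>. restrict \<omega> KA) -` XA \<inter> space unif_space)
        * unif.prob ((\<lambda>\<omega>. restrict \<omega> KB) -` XB \<inter> space unif_space)" .
  have "pop (restrict \<omega> KA) l = pop \<omega> l" for \<omega>
    by (rule pc_iter_cong) (simp add: KA_def)
  then have A: "(\<lambda>\<omega>. restrict \<omega> KA) -` XA \<inter> space unif_space = pop_eq l t"
    by (auto simp: XA_def space_PiM unif_space_def)
  have B: "(\<lambda>\<omega>. restrict \<omega> KB) -` XB \<inter> space unif_space = row_box l a b n"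
    by (auto simp: XB_def row_box_def space_PiM unif_space_def KB_def)
  have "(\<lambda>\<omega>. (restrict \<omega> KA, restrict \<omega> KB)) -` (XA \<times> XB) \<inter> space unif_space
      = pop_eq l t \<inter> row_box l a b n"
    using A B by blast
  with indep A B show ?thesis
    by simp
qed

lemma prob_escape_le:
  assumes box: "\<forall>p<length t. 0 \<le> a p \<and> a p < b p \<and> b p \<le> 1"
    and hit: "\<forall>u. (\<forall>p<length t. a p < u p \<and> u p < b p) \<longrightarrow> n_offspring N t u = N"
  shows "unif.prob (escape l t) \<le> (1 - (\<Prod>p<length t. b p - a p)) * unif.prob (pop_eq l t)"
proof -
  let ?B = "row_box l a b (length t)"
  have "escape l t \<subseteq> pop_eq l t - ?B"
    using hit N_pos by (auto simp: row_box_def pop_Suc)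
  then have "unif.prob (escape l t) \<le> unif.prob (pop_eq l t - ?B)"
    by (intro unif.finite_measure_mono) (simp_all add: sets.Diff sets_row_box)
  also have "\<dots> = unif.prob (pop_eq l t) - unif.prob (pop_eq l t \<inter> ?B)"
    by (rule unif.finite_measure_Diff') (simp_all add: sets_row_box)
  also have "\<dots> = (1 - (\<Prod>p<length t. b p - a p)) * unif.prob (pop_eq l t)"
    using prob_pop_eq_inter_row_box measure_row_box[OF box] by (simp add: algebra_simps)
  finally show ?thesis .
qed

lemma prob_escape_target_eq_0: "unif.prob (escape l target) = 0"
  using prob_escape_le[of target "\<lambda>_. 0" "\<lambda>_. 1" l] n_offspring_uniform_target[of N]
  by (simp add: measure_le_0_iff)

lemma exists_escape_bound:
  assumes "t \<in> reachable"
  shows "\<exists>q>0. \<forall>l. unif.prob (escape l t) \<le> (1 - q) * unif.prob (pop_eq l t)"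
proof -
  obtain a b where box: "\<forall>p<length t. 0 \<le> a p \<and> a p < b p \<and> b p \<le> 1"
    and hit: "\<forall>u. (\<forall>p<length t. a p < u p \<and> u p < b p) \<longrightarrow> n_offspring N t u = N"
    using exists_box_n_offspring_eq[OF reachable_nonneg[OF assms] sum_list_reachable[OF assms]]
    by blast
  have "0 < (\<Prod>p<length t. b p - a p)"
    using box by (intro prod_pos) auto
  with prob_escape_le[OF box hit] show ?thesis
    by blast
qed

lemma exists_uniform_escape_bound:
  "\<exists>q. 0 < q \<and> q \<le> 1 \<and>
     (\<forall>t\<in>reachable. \<forall>l. unif.prob (escape l t) \<le> (1 - q) * unif.prob (pop_eq l t))"
proof -
  have "\<forall>t\<in>reachable. \<exists>q. 0 < q \<and> (\<forall>l. unif.prob (escape l t) \<le> (1 - q) * unif.prob (pop_eq l t))"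
    by (intro ballI exists_escape_bound)
  from bchoice[OF this] obtain Q where Q: "\<forall>t\<in>reachable. 0 < Q t \<and>
      (\<forall>l. unif.prob (escape l t) \<le> (1 - Q t) * unif.prob (pop_eq l t))"
    by blast
  define q where "q = Min (insert 1 (Q ` reachable))"
  have "0 < q" and "q \<le> 1"
    using Q finite_reachable by (simp_all add: q_def)
  moreover have "unif.prob (escape l t) \<le> (1 - q) * unif.prob (pop_eq l t)"
    if "t \<in> reachable" for t l
  proof -
    have "unif.prob (escape l t) \<le> (1 - Q t) * unif.prob (pop_eq l t)"
      using Q that by blast
    also have "\<dots> \<le> (1 - q) * unif.prob (pop_eq l t)"
      using that finite_reachable by (intro mult_right_mono) (simp_all add: q_def)
    finally show ?thesis .
  qed
  ultimately show ?thesis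
    by blast
qed

lemma prob_not_target_Suc_le:
  assumes escape: "\<forall>t\<in>reachable. \<forall>l. unif.prob (escape l t) \<le> (1 - q) * unif.prob (pop_eq l t)"
  shows "unif.prob {\<omega> \<in> space unif_space. pop \<omega> (Suc l) \<noteq> target}
           \<le> (1 - q) * unif.prob {\<omega> \<in> space unif_space. pop \<omega> l \<noteq> target}"
proof -
  let ?F = "\<lambda>t. {\<omega> \<in> space unif_space. pop \<omega> l = t \<and> t \<noteq> target}"
  have "{\<omega> \<in> space unif_space. pop \<omega> (Suc l) \<noteq> target} \<subseteq> (\<Union>t\<in>reachable. escape l t)"
    using pop_in_reachable by auto
  then have "unif.prob {\<omega> \<in> space unif_space. pop \<omega> (Suc l) \<noteq> target}
      \<le> unif.prob (\<Union>t\<in>reachable. escape l t)"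
    by (intro unif.finite_measure_mono sets.finite_UN finite_reachable) simp_all
  also have "\<dots> \<le> (\<Sum>t\<in>reachable. unif.prob (escape l t))"
    by (intro unif.finite_measure_subadditive_finite finite_reachable) auto
  also have "\<dots> \<le> (\<Sum>t\<in>reachable. (1 - q) * unif.prob (?F t))"
  proof (rule sum_mono)
    fix t assume t: "t \<in> reachable"
    show "unif.prob (escape l t) \<le> (1 - q) * unif.prob (?F t)"
    proof (cases "t = target")
      case True
      then show ?thesis
        using prob_escape_target_eq_0[of l] by simp
    next
      case False
      then show ?thesis
        using escape[rule_format, OF t, of l] by simp
    qed
  qed
  also have "\<dots> = (1 - q) * unif.prob (\<Union>t\<in>reachable. ?F t)"
    by (subst unif.finite_measure_finite_Union)
       (auto simp: finite_reachable disjoint_family_on_def sum_distrib_left)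
  also have "(\<Union>t\<in>reachable. ?F t) = {\<omega> \<in> space unif_space. pop \<omega> l \<noteq> target}"
    using pop_in_reachable by auto
  finally show ?thesis .
qed

lemma exists_geometric_bound:
  "\<exists>q. 0 < q \<and> q \<le> 1 \<and>
     (\<forall>l. unif.prob {\<omega> \<in> space unif_space. length (pop \<omega> l) \<noteq> N} \<le> (1 - q) ^ l)"
proof -
  obtain q where q: "0 < q" "q \<le> 1"
    and escape: "\<forall>t\<in>reachable. \<forall>l. unif.prob (escape l t) \<le> (1 - q) * unif.prob (pop_eq l t)"
    using exists_uniform_escape_bound by blast
  have not_target: "unif.prob {\<omega> \<in> space unif_space. pop \<omega> l \<noteq> target} \<le> (1 - q) ^ l" for l
  proof (induction l)
    case (Suc l)
    show ?case
      using prob_not_target_Suc_le[OF escape, of l] mult_left_mono[OF Suc, of "1 - q"] q by simp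
  qed simp
  have "unif.prob {\<omega> \<in> space unif_space. length (pop \<omega> l) \<noteq> N}
      \<le> unif.prob {\<omega> \<in> space unif_space. pop \<omega> l \<noteq> target}" for l
    by (rule unif.finite_measure_mono) auto
  with q not_target show ?thesis
    by (meson order_trans)
qed

lemma exists_exponential_bound:
  "\<exists>lam>0. \<forall>l. unif.prob {\<omega> \<in> space unif_space. length (pop \<omega> l) \<noteq> N} \<le> exp (- real l * lam)"
proof -
  obtain q where q: "0 < q" "q \<le> 1"
    and geom: "\<And>l. unif.prob {\<omega> \<in> space unif_space. length (pop \<omega> l) \<noteq> N} \<le> (1 - q) ^ l"
    using exists_geometric_bound by blast
  have "(1 - q) ^ l \<le> exp (- real l * q)" for l
  proof -
    have "(1 - q) ^ l \<le> exp (- q) ^ l"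
      using exp_ge_add_one_self[of "- q"] q by (intro power_mono) auto
    then show ?thesis
      by (simp add: exp_of_nat_mult[symmetric])
  qed
  with q geom show ?thesis
    by (meson order_trans)
qed

lemma prob_length_eq_tendsto_1:
  "(\<lambda>l. unif.prob {\<omega> \<in> space unif_space. length (pop \<omega> l) = N}) \<longlonglongrightarrow> 1"
proof -
  let ?bad = "\<lambda>l. {\<omega> \<in> space unif_space. length (pop \<omega> l) \<noteq> N}"
  obtain q where q: "0 < q" "q \<le> 1" and geom: "\<And>l. unif.prob (?bad l) \<le> (1 - q) ^ l"
    using exists_geometric_bound by blast
  have "(\<lambda>l. unif.prob (?bad l)) \<longlonglongrightarrow> 0"
  proof (rule tendsto_sandwich[of "\<lambda>_. 0" _ _ "\<lambda>l. (1 - q) ^ l"])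
    show "\<forall>\<^sub>F l in sequentially. unif.prob (?bad l) \<le> (1 - q) ^ l"
      using geom by simp
    show "(\<lambda>l. (1 - q) ^ l) \<longlonglongrightarrow> 0"
      using q by (intro LIMSEQ_power_zero) auto
  qed simp_all
  then have "(\<lambda>l. 1 - unif.prob (?bad l)) \<longlonglongrightarrow> 1"
    using tendsto_diff[OF tendsto_const[of 1]] by fastforce
  moreover have "unif.prob {\<omega> \<in> space unif_space. length (pop \<omega> l) = N} = 1 - unif.prob (?bad l)" for l
  proof -
    have "{\<omega> \<in> space unif_space. length (pop \<omega> l) = N} = space unif_space - ?bad l"
      by auto
    moreover have "?bad l \<in> unif.events"
      by measurable
    ultimately show ?thesis
      using unif.prob_compl by simp
  qed
  ultimately show ?thesis
    by simp
qed

end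

theorem proposition1:
  fixes Nobj :: nat and ws0 :: "real list"
  assumes "Nobj > 0" and "ws0 \<noteq> []" and "\<forall>w\<in>set ws0. w > 0" and "sum_list ws0 = 1"
  shows "(\<forall>l. {\<omega> \<in> space unif_space. length (pc_iter Nobj ws0 \<omega> l) \<noteq> Nobj} \<in> sets unif_space)
       \<and> (\<lambda>l. measure unif_space {\<omega> \<in> space unif_space. length (pc_iter Nobj ws0 \<omega> l) = Nobj})
           \<longlonglongrightarrow> 1
       \<and> (\<exists>lam>0. \<forall>l. measure unif_space {\<omega> \<in> space unif_space. length (pc_iter Nobj ws0 \<omega> l) \<noteq> Nobj}
                      \<le> exp (- real l * lam))"
proof -
  interpret population_control Nobj ws0
    using assms by unfold_locales (auto simp: less_imp_le)
  have "{\<omega> \<in> space unif_space. length (pop \<omega> l) \<noteq> Nobj} \<in> sets unif_space" for l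
    by measurable
  with prob_length_eq_tendsto_1 exists_exponential_bound show ?thesis
    by blast
qed

end
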